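(* Let $n_1,n_2\ge 1$ be integers, $n=n_1+n_2$, and consider a uniformly random arrangement of $n_1$ symbols $x$ and $n_2$ symbols $y$ (all $\binom{n}{n_1}$ arrangements equally likely). Let $R_1$ and $R_2$ be the numbers of runs of $x$'s and of $y$'s, respectively, and $R_M=\max(R_1,R_2)$. Then (i) $E(R_M\mid R_1>R_2)=2+\dfrac{(n_1-2)(n_2-1)}{n-2}$; (ii) $E(R_M\mid R_1<R_2)=2+\dfrac{(n_1-1)(n_2-2)}{n-2}$; (iii) $E(R_M\mid R_1=R_2)=1+\dfrac{(n_1-1)(n_2-1)}{n-2}$.
   Context: A run is a maximal block of consecutive identical symbols in the arrangement. Conditional expectations given an event are considered when that event has positive probability. *)

theory Defs
  imports Main "HOL-Library.Multiset" Complex_Main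
begin

text \<open>An arrangement of n1 symbols x (encoded as True) and n2 symbols y
 (encoded as False) is a boolean list of length n1+n2 with exactly n1 Trues.\<close>
definition arrangements :: "nat \<Rightarrow> nat \<Rightarrow> bool list set" where
  "arrangements n1 n2 = {xs. length xs = n1 + n2 \<and> count_list xs True = n1}"

definition runs :: "bool \<Rightarrow> bool list \<Rightarrow> nat" where
  "runs c xs = count_list (remdups_adj xs) c"

definition R1 :: "bool list \<Rightarrow> nat" where "R1 xs = runs True xs"
definition R2 :: "bool list \<Rightarrow> nat" where "R2 xs = runs False xs"
definition RM :: "bool list \<Rightarrow> nat" where "RM xs = max (R1 xs) (R2 xs)"

definition cond_exp :: "nat \<Rightarrow> nat \<Rightarrow> (bool list \<Rightarrow> real) \<Rightarrow> (bool list \<Rightarrow> bool) \<Rightarrow> real" where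
  "cond_exp n1 n2 X E =
     (\<Sum>xs\<in>{xs\<in>arrangements n1 n2. E xs}. X xs) / real (card {xs\<in>arrangements n1 n2. E xs})"

definition event_prob :: "nat \<Rightarrow> nat \<Rightarrow> (bool list \<Rightarrow> bool) \<Rightarrow> real" where
  "event_prob n1 n2 E = real (card {xs\<in>arrangements n1 n2. E xs}) / real (card (arrangements n1 n2))"

end

theory Submission
  imports Defs
begin

text \<open>Runs of x and y alternate, so \<open>R1 - R2 = [first symbol is x] + [last symbol is x] - 1\<close>.
  Hence \<open>R1 > R2\<close>, \<open>R1 < R2\<close> and \<open>R1 = R2\<close> mean that the arrangement begins and ends with x,
  begins and ends with y, or has different end symbols, and deleting the two end symbols identifies
  each event with one (or two) copies of the arrangements of the remaining \<open>n - 2\<close> symbols.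
  There \<open>RM\<close> becomes \<open>1 + R2\<close> of the interior, resp. \<open>R1\<close> of the interior with an x prepended,
  so everything reduces to the total number \<open>(n2 + 1) * (n - 1 choose n1 - 1)\<close> of x-runs over
  all arrangements, which follows from Pascal's recursion. Case (ii) is case (i) with x and y
  exchanged.\<close>

lemma runs_Cons:
  "runs c (x # xs) = runs c xs + (if x = c \<and> (xs = [] \<or> hd xs \<noteq> c) then 1 else 0)"
  unfolding runs_def by (cases xs) auto

lemma runs_rev [simp]: "runs c (rev xs) = runs c xs"
  unfolding runs_def by simp

lemma runs_snoc:
  "runs c (xs @ [x]) = runs c xs + (if x = c \<and> (xs = [] \<or> last xs \<noteq> c) then 1 else 0)"
  using runs_Cons[of c x "rev xs"] by (simp add: hd_rev flip: runs_rev[of c "xs @ [x]"])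

lemma R1_Cons_False [simp]: "R1 (False # xs) = R1 xs"
  by (simp add: R1_def runs_Cons)

lemma R1_Cons_True: "xs \<noteq> [] \<Longrightarrow> R1 (True # xs) = R1 xs + of_bool (\<not> hd xs)"
  by (simp add: R1_def runs_Cons)

lemma R1_snoc_False [simp]: "R1 (xs @ [False]) = R1 xs"
  by (simp add: R1_def runs_snoc)

lemma R2_Cons_True [simp]: "R2 (True # xs) = R2 xs"
  by (simp add: R2_def runs_Cons)

lemma R2_snoc_True [simp]: "R2 (xs @ [True]) = R2 xs"
  by (simp add: R2_def runs_snoc)

lemma R1_rev [simp]: "R1 (rev xs) = R1 xs"
  by (simp add: R1_def)

lemma R1_replicate_True: "R1 (replicate (Suc n) True) = 1"
  by (simp add: R1_def runs_def remdups_adj_replicate del: replicate_Suc)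

lemma R1_replicate_False: "R1 (replicate n False) = 0"
  by (simp add: R1_def runs_def remdups_adj_replicate)

lemma count_list_map_Not: "count_list (map Not xs) b = count_list xs (\<not> b)"
  by (induction xs) auto

lemma R1_map_Not: "R1 (map Not xs) = R2 xs"
proof -
  have "inj Not" by (auto intro: injI)
  then show ?thesis
    by (simp add: R1_def R2_def runs_def remdups_adj_map_injective count_list_map_Not)
qed

lemma R2_map_Not: "R2 (map Not xs) = R1 xs"
  using R1_map_Not[of "map Not xs"] by (simp add: comp_def)

lemma inj_on_map_Not: "inj_on (map Not) A"
  by (rule inj_on_inverseI[where g = "map Not"]) (simp add: comp_def)

lemma R1_minus_R2:
  "xs \<noteq> [] \<Longrightarrow> int (R1 xs) = int (R2 xs) + of_bool (hd xs) + of_bool (last xs) - 1"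
proof (induction xs)
  case (Cons x xs)
  then show ?case
    by (cases "xs = []"; cases x; cases "hd xs")
       (simp_all add: R1_def R2_def runs_Cons, simp_all add: runs_def)
qed simp

lemma R2_less_R1_iff: "xs \<noteq> [] \<Longrightarrow> R2 xs < R1 xs \<longleftrightarrow> hd xs \<and> last xs"
  using R1_minus_R2[of xs] by (cases "hd xs"; cases "last xs") auto

lemma R1_eq_R2_iff: "xs \<noteq> [] \<Longrightarrow> R1 xs = R2 xs \<longleftrightarrow> hd xs \<noteq> last xs"
  using R1_minus_R2[of xs] by (cases "hd xs"; cases "last xs") auto

lemma count_list_True_False: "count_list xs True + count_list xs False = length xs"
  by (induction xs) auto

lemma count_list_replicate: "count_list (replicate n x) y = (if x = y then n else 0)"
  by (induction n) auto

lemma finite_arrangements: "finite (arrangements a b)"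
proof (rule finite_subset)
  show "arrangements a b \<subseteq> {xs. set xs \<subseteq> UNIV \<and> length xs = a + b}"
    by (auto simp: arrangements_def)
qed (use finite_lists_length_eq[of "UNIV :: bool set" "a + b"] in simp)

lemma arrangements_0_right: "arrangements a 0 = {replicate a True}"
proof -
  have "xs = replicate a True" if "xs \<in> arrangements a 0" for xs
    using that count_list_True_False[of xs]
    by (auto simp: arrangements_def count_list_0_iff intro!: replicate_length_same[symmetric])
       (metis (full_types))
  then show ?thesis by (auto simp: arrangements_def count_list_replicate)
qed

lemma arrangements_0_left: "arrangements 0 b = {replicate b False}"
proof -
  have "xs = replicate b False" if "xs \<in> arrangements 0 b" for xs
    using that by (auto simp: arrangements_def count_list_0_iff intro!: replicate_length_same[symmetric])
  then show ?thesis by (auto simp: arrangements_def count_list_replicate)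
qed

lemma arrangements_Suc_Suc:
  "arrangements (Suc a) (Suc b) =
     Cons True ` arrangements a (Suc b) \<union> Cons False ` arrangements (Suc a) b"
proof (rule set_eqI)
  fix xs
  show "xs \<in> arrangements (Suc a) (Suc b) \<longleftrightarrow>
      xs \<in> Cons True ` arrangements a (Suc b) \<union> Cons False ` arrangements (Suc a) b"
    by (cases xs) (auto simp: arrangements_def)
qed

lemma sum_arrangements_Suc_Suc:
  "(\<Sum>xs\<in>arrangements (Suc a) (Suc b). f xs) =
     (\<Sum>xs\<in>arrangements a (Suc b). f (True # xs)) + (\<Sum>xs\<in>arrangements (Suc a) b. f (False # xs))"
  unfolding arrangements_Suc_Suc
  by (subst sum.union_disjoint) (auto simp: finite_arrangements sum.reindex)

lemma card_arrangements: "card (arrangements a b) = (a + b) choose a"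
proof (induction b arbitrary: a)
  case 0
  then show ?case by (simp add: arrangements_0_right)
next
  case (Suc b)
  then show ?case
  proof (induction a)
    case (Suc a)
    have "card (arrangements (Suc a) (Suc b)) = card (arrangements a (Suc b)) + card (arrangements (Suc a) b)"
      unfolding arrangements_Suc_Suc
      by (subst card_Un_disjoint) (auto simp: finite_arrangements card_image)
    then show ?case using Suc by simp
  qed (simp add: arrangements_0_left)
qed

lemma image_involution:
  assumes "\<And>x. f (f x) = x" and "f ` A \<subseteq> B" and "f ` B \<subseteq> A"
  shows "f ` A = B"
proof
  show "B \<subseteq> f ` A"
  proof
    fix x assume "x \<in> B"
    then have "f x \<in> A" using assms(3) by blast
    then show "x \<in> f ` A" using image_eqI[of x f "f x"] assms(1) by simp
  qed
qed (rule assms(2))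

lemma map_Not_arrangements: "map Not ` arrangements a b = arrangements b a"
proof (rule image_involution)
  have "map Not xs \<in> arrangements b a" if "xs \<in> arrangements a b" for xs a b
    using that count_list_True_False[of xs] by (auto simp: arrangements_def count_list_map_Not)
  then show "map Not ` arrangements a b \<subseteq> arrangements b a"
    and "map Not ` arrangements b a \<subseteq> arrangements a b" by blast+
qed (simp add: comp_def)

lemma rev_arrangements: "rev ` arrangements a b = arrangements a b"
  by (rule image_involution) (auto simp: arrangements_def)

lemma sum_R1_arrangements_Suc_Suc:
  "(\<Sum>xs\<in>arrangements (Suc a) (Suc b). R1 xs) =
     (\<Sum>xs\<in>arrangements a (Suc b). R1 xs) + ((a + b) choose a) + (\<Sum>xs\<in>arrangements (Suc a) b. R1 xs)"
proof -
  have nonempty: "xs \<noteq> []" if "xs \<in> arrangements a (Suc b)" for xs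
    using that by (auto simp: arrangements_def)
  have "{xs \<in> arrangements a (Suc b). \<not> hd xs} = Cons False ` arrangements a b"
  proof (rule set_eqI)
    fix xs
    show "xs \<in> {xs \<in> arrangements a (Suc b). \<not> hd xs} \<longleftrightarrow> xs \<in> Cons False ` arrangements a b"
      by (cases xs) (auto simp: arrangements_def)
  qed
  then have "card {xs \<in> arrangements a (Suc b). \<not> hd xs} = (a + b) choose a"
    by (simp add: card_image card_arrangements)
  then have "(\<Sum>xs\<in>arrangements a (Suc b). of_bool (\<not> hd xs) :: nat) = (a + b) choose a"
    by (simp add: finite_arrangements Int_def)
  then show ?thesis
    by (simp add: sum_arrangements_Suc_Suc R1_Cons_True nonempty sum.distrib cong: sum.cong)
qed

lemma sum_R1_arrangements: "(\<Sum>xs\<in>arrangements (Suc a) b. R1 xs) = (b + 1) * ((a + b) choose a)"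
proof (induction b arbitrary: a)
  case 0
  then show ?case by (simp add: arrangements_0_right R1_replicate_True del: replicate_Suc)
next
  case (Suc b)
  then show ?case
  proof (induction a)
    case 0
    then show ?case
      by (simp add: sum_R1_arrangements_Suc_Suc arrangements_0_left R1_replicate_False)
  next
    case (Suc a)
    then show ?case by (simp add: sum_R1_arrangements_Suc_Suc algebra_simps)
  qed
qed

lemma sum_R2_arrangements: "(\<Sum>xs\<in>arrangements a (Suc b). R2 xs) = (a + 1) * ((a + b) choose a)"
proof -
  have "(\<Sum>xs\<in>arrangements a (Suc b). R2 xs) = (\<Sum>xs\<in>map Not ` arrangements a (Suc b). R1 xs)"
    by (simp add: R1_map_Not sum.reindex inj_on_map_Not)
  also have "\<dots> = (a + 1) * ((b + a) choose b)"
    by (simp only: map_Not_arrangements sum_R1_arrangements)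
  finally show ?thesis using binomial_symmetric[of b "b + a"] by (simp add: add.commute)
qed

lemma sum_R1_Cons_True_arrangements:
  "real (\<Sum>xs\<in>arrangements p q. R1 (True # xs)) =
     real ((p + q) choose p) * (1 + real p * real q / real (p + q))"
proof (cases q)
  case 0
  then show ?thesis using R1_replicate_True[of p] by (simp add: arrangements_0_right)
next
  case (Suc r)
  define K where "K = (\<Sum>xs\<in>arrangements p q. R1 (True # xs))"
  define C where "C = real ((p + q) choose p)"
  define D where "D = real ((p + r) choose p)"
  have "K + q * ((p + r) choose p) = (q + 1) * ((p + q) choose p)"
    using sum_arrangements_Suc_Suc[where f = R1 and a = p and b = r] sum_R1_arrangements[of p q]
      sum_R1_arrangements[of p r] Suc
    by (simp add: K_def)
  from arg_cong[where f = real, OF this]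
  have K: "real K + real q * D = (real q + 1) * C"
    unfolding C_def D_def by (simp add: algebra_simps)
  have "q * ((p + q) choose p) = (p + q) * ((p + r) choose p)"
    using binomial_absorb_comp[of "p + q" p] Suc by simp
  then have "D = real q * C / real (p + q)"
    unfolding C_def D_def using Suc by (simp add: field_simps flip: of_nat_mult)
  with K have "real K = C * (1 + real q - real q * real q / real (p + q))"
    by (simp add: algebra_simps)
  also have "\<dots> = C * (1 + real p * real q / real (p + q))"
    using Suc by (simp add: field_simps)
  finally show ?thesis unfolding C_def K_def .
qed

lemma hd_butlast_tl_last:
  assumes "2 \<le> length xs"
  shows "hd xs # butlast (tl xs) @ [last xs] = xs"
proof (cases xs)
  case (Cons x ys)
  with assms show ?thesis by (cases ys rule: rev_cases) auto
qed (use assms in simp)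

lemma inj_on_enclose: "inj_on (\<lambda>xs. x # xs @ [y]) A"
  by (rule inj_onI) simp

lemma Collect_hd_last_eq_image:
  "{xs \<in> A. 2 \<le> length xs \<and> hd xs = x \<and> last xs = y} =
     (\<lambda>zs. x # zs @ [y]) ` {zs. x # zs @ [y] \<in> A}" (is "?L = ?R")
proof
  show "?L \<subseteq> ?R"
  proof
    fix xs assume xs: "xs \<in> ?L"
    then have "x # butlast (tl xs) @ [y] = xs"
      using hd_butlast_tl_last[of xs] by simp
    with xs show "xs \<in> ?R"
      using image_eqI[of xs "\<lambda>zs. x # zs @ [y]" "butlast (tl xs)"] by simp
  qed
qed auto

lemma two_le_length_arrangements:
  "xs \<in> arrangements a b \<Longrightarrow> 1 \<le> a \<Longrightarrow> 1 \<le> b \<Longrightarrow> 2 \<le> length xs"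
  by (simp add: arrangements_def)

lemma R2_less_R1_arrangements:
  assumes "1 \<le> a" and "1 \<le> b"
  shows "{xs \<in> arrangements a b. R1 xs > R2 xs} =
           (\<lambda>zs. True # zs @ [True]) ` {zs. True # zs @ [True] \<in> arrangements a b}"
proof -
  have "R1 xs > R2 xs \<longleftrightarrow> 2 \<le> length xs \<and> hd xs = True \<and> last xs = True"
    if "xs \<in> arrangements a b" for xs
  proof -
    have "2 \<le> length xs" using two_le_length_arrangements[OF that assms] .
    moreover from this have "xs \<noteq> []" by auto
    ultimately show ?thesis using R2_less_R1_iff by auto
  qed
  then show ?thesis unfolding Collect_hd_last_eq_image[symmetric] by blast
qed

lemma R1_eq_R2_arrangements:
  assumes "1 \<le> a" and "1 \<le> b"
  shows "{xs \<in> arrangements a b. R1 xs = R2 xs} =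
           (\<lambda>zs. True # zs @ [False]) ` {zs. True # zs @ [False] \<in> arrangements a b} \<union>
           (\<lambda>zs. False # zs @ [True]) ` {zs. False # zs @ [True] \<in> arrangements a b}"
proof -
  have "R1 xs = R2 xs \<longleftrightarrow> (2 \<le> length xs \<and> hd xs = True \<and> last xs = False)
      \<or> (2 \<le> length xs \<and> hd xs = False \<and> last xs = True)" if "xs \<in> arrangements a b" for xs
  proof -
    have "2 \<le> length xs" using two_le_length_arrangements[OF that assms] .
    moreover from this have "xs \<noteq> []" by auto
    ultimately show ?thesis using R1_eq_R2_iff by auto
  qed
  then show ?thesis unfolding Collect_hd_last_eq_image[symmetric] by blast
qed

lemma R2_less_R1_imp_two_le:
  assumes "xs \<in> arrangements a b" "1 \<le> a" "1 \<le> b" "R1 xs > R2 xs"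
  shows "2 \<le> a"
proof -
  from assms obtain zs where "True # zs @ [True] \<in> arrangements a b"
    using R2_less_R1_arrangements[OF assms(2,3)] by blast
  then show ?thesis by (simp add: arrangements_def)
qed

lemma cond_exp_RM_R1_greater:
  assumes "2 \<le> a" and "1 \<le> b"
  shows "cond_exp a b (\<lambda>xs. real (RM xs)) (\<lambda>xs. R1 xs > R2 xs)
           = 2 + (real a - 2) * (real b - 1) / (real (a + b) - 2)"
proof -
  obtain c d where a: "a = c + 2" and b: "b = d + 1"
    using assms le_Suc_ex[of 2 a] le_Suc_ex[of 1 b] by (auto simp: add.commute)
  let ?enclose = "\<lambda>zs. True # zs @ [True]"
  have "{xs \<in> arrangements a b. R1 xs > R2 xs} = ?enclose ` {zs. ?enclose zs \<in> arrangements a b}"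
    using assms by (simp add: R2_less_R1_arrangements)
  also have "{zs. ?enclose zs \<in> arrangements a b} = arrangements c b"
    using a by (auto simp: arrangements_def)
  finally have event: "{xs \<in> arrangements a b. R1 xs > R2 xs} = ?enclose ` arrangements c b" .
  have RM: "RM (?enclose zs) = R2 zs + 1" for zs
    using R1_minus_R2[of "?enclose zs"] by (simp add: RM_def)
  have card: "card {xs \<in> arrangements a b. R1 xs > R2 xs} = (c + b) choose c"
    unfolding event by (simp add: card_image inj_on_enclose card_arrangements)
  have "(\<Sum>xs\<in>{xs \<in> arrangements a b. R1 xs > R2 xs}. real (RM xs)) =
      (\<Sum>zs\<in>arrangements c b. 1 + real (R2 zs))"
    unfolding event by (simp add: sum.reindex inj_on_enclose RM)
  also have "\<dots> = real ((c + 1) * ((c + d) choose c)) + real ((c + b) choose c)"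
    by (simp add: sum.distrib card_arrangements b sum_R2_arrangements flip: of_nat_sum)
  finally have sum: "(\<Sum>xs\<in>{xs \<in> arrangements a b. R1 xs > R2 xs}. real (RM xs)) =
      real ((c + 1) * ((c + d) choose c)) + real ((c + b) choose c)" .
  have "b * ((c + b) choose c) = (c + b) * ((c + d) choose c)"
    using binomial_absorb_comp[of "c + b" c] b by simp
  then have "real ((c + d) choose c) = real b * real ((c + b) choose c) / real (c + b)"
    using b by (simp add: field_simps flip: of_nat_mult)
  then show ?thesis
    unfolding cond_exp_def sum card using a b by (simp add: field_simps)
qed

lemma cond_exp_map_Not:
  "cond_exp b a X E = cond_exp a b (\<lambda>xs. X (map Not xs)) (\<lambda>xs. E (map Not xs))"
proof -
  have "{xs \<in> arrangements b a. E xs} = {xs \<in> map Not ` arrangements a b. E xs}"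
    by (simp only: map_Not_arrangements)
  also have "\<dots> = map Not ` {xs \<in> arrangements a b. E (map Not xs)}"
    by blast
  finally have "{xs \<in> arrangements b a. E xs} = map Not ` {xs \<in> arrangements a b. E (map Not xs)}" .
  then show ?thesis unfolding cond_exp_def by (simp add: sum.reindex card_image inj_on_map_Not)
qed

lemma cond_exp_RM_R1_less:
  assumes "1 \<le> a" and "2 \<le> b"
  shows "cond_exp a b (\<lambda>xs. real (RM xs)) (\<lambda>xs. R1 xs < R2 xs)
           = 2 + (real a - 1) * (real b - 2) / (real (a + b) - 2)"
proof -
  have "cond_exp a b (\<lambda>xs. real (RM xs)) (\<lambda>xs. R1 xs < R2 xs) =
      cond_exp b a (\<lambda>xs. real (RM xs)) (\<lambda>xs. R1 xs > R2 xs)"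
    by (simp add: cond_exp_map_Not[of a b] RM_def R1_map_Not R2_map_Not max.commute)
  then show ?thesis
    using cond_exp_RM_R1_greater[OF assms(2,1)] by (simp add: add.commute mult.commute)
qed

lemma cond_exp_RM_R1_eq:
  assumes "1 \<le> a" and "1 \<le> b"
  shows "cond_exp a b (\<lambda>xs. real (RM xs)) (\<lambda>xs. R1 xs = R2 xs)
           = 1 + (real a - 1) * (real b - 1) / (real (a + b) - 2)"
proof -
  obtain p q where a: "a = p + 1" and b: "b = q + 1"
    using assms le_Suc_ex[of 1 a] le_Suc_ex[of 1 b] by (auto simp: add.commute)
  let ?TF = "\<lambda>zs. True # zs @ [False]" and ?FT = "\<lambda>zs. False # zs @ [True]"
  let ?A = "arrangements a b"
  have "{xs \<in> ?A. R1 xs = R2 xs} = ?TF ` {zs. ?TF zs \<in> ?A} \<union> ?FT ` {zs. ?FT zs \<in> ?A}"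
    using assms by (simp add: R1_eq_R2_arrangements)
  also have "{zs. ?TF zs \<in> ?A} = arrangements p q"
    using a b by (auto simp: arrangements_def)
  also have "{zs. ?FT zs \<in> ?A} = arrangements p q"
    using a b by (auto simp: arrangements_def)
  finally have event:
    "{xs \<in> ?A. R1 xs = R2 xs} = ?TF ` arrangements p q \<union> ?FT ` arrangements p q" .
  have "?FT ` arrangements p q = ?FT ` rev ` arrangements p q"
    by (simp only: rev_arrangements)
  also have "\<dots> = rev ` ?TF ` arrangements p q"
    by (simp add: image_image)
  finally have FT: "?FT ` arrangements p q = rev ` ?TF ` arrangements p q" .
  have disjoint: "?TF ` arrangements p q \<inter> ?FT ` arrangements p q = {}"
    by auto
  define K where "K = (\<Sum>zs\<in>arrangements p q. R1 (True # zs))"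
  have card: "card {xs \<in> ?A. R1 xs = R2 xs} = 2 * ((p + q) choose p)"
    unfolding event
    by (simp add: card_Un_disjoint[OF _ _ disjoint] finite_arrangements card_image inj_on_enclose
        card_arrangements)
  have "(\<Sum>xs\<in>{xs \<in> ?A. R1 xs = R2 xs}. RM xs) = (\<Sum>xs\<in>{xs \<in> ?A. R1 xs = R2 xs}. R1 xs)"
    by (simp add: RM_def)
  also have "\<dots> = (\<Sum>xs\<in>?TF ` arrangements p q. R1 xs) + (\<Sum>xs\<in>rev ` ?TF ` arrangements p q. R1 xs)"
    unfolding event by (subst sum.union_disjoint[OF _ _ disjoint]) (simp_all add: finite_arrangements FT)
  also have "(\<Sum>xs\<in>rev ` ?TF ` arrangements p q. R1 xs) = (\<Sum>xs\<in>?TF ` arrangements p q. R1 xs)"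
    by (subst sum.reindex) (auto intro: inj_onI)
  also have "(\<Sum>xs\<in>?TF ` arrangements p q. R1 xs) + \<dots> = 2 * K"
    using R1_snoc_False[of "True # zs" for zs]
    by (simp add: sum.reindex[OF inj_on_enclose] K_def del: R1_snoc_False)
  finally have sum: "(\<Sum>xs\<in>{xs \<in> ?A. R1 xs = R2 xs}. real (RM xs)) = 2 * real K"
    by (simp flip: of_nat_sum)
  show ?thesis
    unfolding cond_exp_def sum card
    using sum_R1_Cons_True_arrangements[of p q] a b by (simp add: K_def)
qed

lemma event_prob_pos_imp_ex: "event_prob a b E > 0 \<Longrightarrow> \<exists>xs\<in>arrangements a b. E xs"
  unfolding event_prob_def by (cases "{xs \<in> arrangements a b. E xs} = {}") auto

theorem lemma2:
  fixes n1 n2 :: nat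
  assumes "n1 \<ge> 1" and "n2 \<ge> 1"
  defines "n \<equiv> n1 + n2"
  shows "(event_prob n1 n2 (\<lambda>xs. R1 xs > R2 xs) > 0 \<longrightarrow>
           cond_exp n1 n2 (\<lambda>xs. real (RM xs)) (\<lambda>xs. R1 xs > R2 xs)
             = 2 + (real n1 - 2) * (real n2 - 1) / (real n - 2))
       \<and> (event_prob n1 n2 (\<lambda>xs. R1 xs < R2 xs) > 0 \<longrightarrow>
           cond_exp n1 n2 (\<lambda>xs. real (RM xs)) (\<lambda>xs. R1 xs < R2 xs)
             = 2 + (real n1 - 1) * (real n2 - 2) / (real n - 2))
       \<and> (event_prob n1 n2 (\<lambda>xs. R1 xs = R2 xs) > 0 \<longrightarrow>
           cond_exp n1 n2 (\<lambda>xs. real (RM xs)) (\<lambda>xs. R1 xs = R2 xs)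
             = 1 + (real n1 - 1) * (real n2 - 1) / (real n - 2))"
proof (intro conjI impI)
  assume "event_prob n1 n2 (\<lambda>xs. R1 xs > R2 xs) > 0"
  then obtain xs where "xs \<in> arrangements n1 n2" "R1 xs > R2 xs"
    by (blast dest: event_prob_pos_imp_ex)
  with assms have "2 \<le> n1" by (blast intro: R2_less_R1_imp_two_le)
  with assms show "cond_exp n1 n2 (\<lambda>xs. real (RM xs)) (\<lambda>xs. R1 xs > R2 xs)
      = 2 + (real n1 - 2) * (real n2 - 1) / (real n - 2)"
    by (simp add: cond_exp_RM_R1_greater)
next
  assume "event_prob n1 n2 (\<lambda>xs. R1 xs < R2 xs) > 0"
  then obtain xs where "xs \<in> arrangements n1 n2" "R1 xs < R2 xs"
    by (blast dest: event_prob_pos_imp_ex)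
  then have "map Not xs \<in> arrangements n2 n1" "R1 (map Not xs) > R2 (map Not xs)"
    using map_Not_arrangements[of n1 n2] by (auto simp: R1_map_Not R2_map_Not)
  with assms have "2 \<le> n2" by (blast intro: R2_less_R1_imp_two_le)
  with assms show "cond_exp n1 n2 (\<lambda>xs. real (RM xs)) (\<lambda>xs. R1 xs < R2 xs)
      = 2 + (real n1 - 1) * (real n2 - 2) / (real n - 2)"
    by (simp add: cond_exp_RM_R1_less)
next
  show "cond_exp n1 n2 (\<lambda>xs. real (RM xs)) (\<lambda>xs. R1 xs = R2 xs)
      = 1 + (real n1 - 1) * (real n2 - 1) / (real n - 2)"
    using assms by (simp add: cond_exp_RM_R1_eq)
qed

end
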